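(* Let $n\ge3$, $\alpha\in(0,n)$, $p,q>0$ with $pq>1$ and $p\le q$, and assume $\frac{1}{p+1}+\frac{1}{q+1}\le\frac{n-\alpha}{n}$. Let $u,v$ be positive solutions on $\mathbb{R}^n$ of $$u(x)=\int_{\mathbb{R}^n}\frac{v^q(y)\,dy}{|x-y|^{n-\alpha}},\qquad v(x)=\int_{\mathbb{R}^n}\frac{u^p(y)\,dy}{|x-y|^{n-\alpha}}.$$ Suppose $u,v$ are bounded and, as $|x|\to\infty$: $u(x)\simeq|x|^{\alpha-n}$; and $v(x)\simeq|x|^{\alpha-n}$ if $p(n-\alpha)>n$, $v(x)\simeq|x|^{\alpha-n}\ln|x|$ if $p(n-\alpha)=n$, $v(x)\simeq|x|^{(\alpha-n)(p+1)+n}$ if $p(n-\alpha)<n$. Then $(u,v)\in L^{r_0}(\mathbb{R}^n)\times L^{s_0}(\mathbb{R}^n)$, where $r_0=\frac{n(pq-1)}{\alpha(q+1)}$, $s_0=\frac{n(pq-1)}{\alpha(p+1)}$.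
   Context: Positive solutions are positive measurable functions satisfying both integral identities (finite) at every point. "$f(x)\simeq g(x)$ as $|x|\to\infty$" means there is $C>0$ with $g(x)/C\le f(x)\le Cg(x)$ for all sufficiently large $|x|$. *)

theory Defs
  imports "HOL-Analysis.Analysis"
begin

definition riesz_pot :: "real \<Rightarrow> ((real ^ 'n) \<Rightarrow> real) \<Rightarrow> real ^ 'n \<Rightarrow> ennreal" where
  "riesz_pot \<alpha> f x =
     (\<integral>\<^sup>+ y. ennreal (f y / norm (x - y) powr (real CARD('n) - \<alpha>)) \<partial>lebesgue)"

definition asym_equiv :: "('a::real_normed_vector \<Rightarrow> real) \<Rightarrow> ('a \<Rightarrow> real) \<Rightarrow> bool" where
  "asym_equiv f g \<longleftrightarrow> (\<exists>C>0. \<exists>R. \<forall>x. norm x \<ge> R \<longrightarrow> g x / C \<le> f x \<and> f x \<le> C * g x)"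

definition in_Lp :: "real \<Rightarrow> ((real ^ 'n) \<Rightarrow> real) \<Rightarrow> bool" where
  "in_Lp r f \<longleftrightarrow> f \<in> borel_measurable lebesgue \<and>
     (\<integral>\<^sup>+ x. ennreal (\<bar>f x\<bar> powr r) \<partial>lebesgue) < \<infinity>"

end

theory Submission
  imports Defs
begin

text \<open>The upper bounds
  dominate \<open>u\<close> and \<open>v\<close> by \<open>|x|\<^sup>-\<^sup>b\<close> near infinity, and \<open>|x|\<^sup>-\<^sup>b\<close> lies in \<open>L\<^sup>r\<close> outside a ball as soon
  as \<open>b r > n\<close>, which follows from a dyadic decomposition into shells. The hypothesis
  \<open>1/(p+1) + 1/(q+1) \<le> (n-\<alpha>)/n\<close> is exactly \<open>\<alpha>(p+1)(q+1) \<le> n(pq-1)\<close>, and this makes each of the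
  decay rates of \<open>u\<close> and \<open>v\<close> large enough for the exponents \<open>r\<^sub>0\<close> and \<open>s\<^sub>0\<close>; the logarithm in the
  borderline case is absorbed by an arbitrarily small power.\<close>

lemma ennreal_term_le_suminf: "(f k :: ennreal) \<le> (\<Sum>i. f i)"
proof -
  have "(\<Sum>i\<in>{k}. f i) \<le> (\<Sum>i. f i)"
    by (rule sum_le_suminf) (auto intro: summableI)
  thus ?thesis by simp
qed

lemma exists_dyadic_shell:
  fixes t R :: real
  assumes "R > 0" "R \<le> t"
  shows "\<exists>k::nat. 2^k * R \<le> t \<and> t \<le> 2^(Suc k) * R"
proof -
  define k where "k = nat \<lfloor>log 2 (t / R)\<rfloor>"
  have tR: "t / R \<ge> 1" using assms by (simp add: field_simps)
  have l0: "log 2 (t/R) \<ge> 0" using tR by simp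
  have "real k \<le> log 2 (t/R)" unfolding k_def using l0 by linarith
  hence "2 powr real k \<le> 2 powr log 2 (t/R)" by simp
  hence lower: "2^k \<le> t/R" using tR by (simp add: powr_realpow)
  have "log 2 (t/R) < real k + 1" unfolding k_def using l0 by linarith
  hence "2 powr log 2 (t/R) < 2 powr (real k + 1)" by (simp del: powr_add)
  hence upper: "t/R < 2^(Suc k)" using tR by (simp add: powr_realpow powr_add)
  show ?thesis using lower upper assms by (intro exI[of _ k]) (auto simp: field_simps)
qed

lemma powr_mult_emeasure_cball_dyadic:
  fixes R g :: real
  assumes "R > 0"
  shows "ennreal ((2^k * R) powr (-g)) * emeasure lborel (cball (0::'a::euclidean_space) (2^Suc k * R))
    = ennreal (unit_ball_vol DIM('a) * 2^DIM('a) * R powr (DIM('a) - g) * (2 powr (DIM('a) - g))^k)"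
proof -
  define n where "n = DIM('a)"
  define V where "V = unit_ball_vol n"
  have "(2^k * R) powr (-g) * (V * (2^Suc k * R)^n)
      = V * 2^n * ((2^k * R) powr (-g) * (2^k * R) powr n)"
    using assms by (simp add: powr_realpow power_mult_distrib algebra_simps)
  also have "\<dots> = V * 2^n * (2^k * R) powr (n - g)"
    by (simp add: powr_add[symmetric])
  also have "\<dots> = V * 2^n * R powr (n - g) * (2 powr (n - g))^k"
    using assms by (simp add: powr_mult powr_realpow[symmetric] powr_powr mult.commute)
  finally have product: "(2^k * R) powr (-g) * (V * (2^Suc k * R)^n)
      = V * 2^n * R powr (n - g) * (2 powr (n - g))^k" .
  have "emeasure lborel (cball (0::'a) (2^Suc k * R)) = ennreal (V * (2^Suc k * R)^n)"
    unfolding V_def n_def using assms by (subst emeasure_cball) auto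
  then show ?thesis
    unfolding n_def[symmetric] V_def[symmetric] by (simp only: ennreal_mult'[symmetric] powr_ge_zero product)
qed

lemma nn_integral_norm_powr_outside_ball_finite:
  fixes g R :: real
  assumes g: "g > DIM('a)" and R: "R > 0"
  shows "(\<integral>\<^sup>+x. indicator {x::'a::euclidean_space. R \<le> norm x} x * ennreal (norm x powr (-g)) \<partial>lborel) < \<infinity>"
proof -
  define c where "c k = (2^k * R) powr (-g)" for k :: nat
  define \<rho> where "\<rho> = (2::real) powr (DIM('a) - g)"
  define A where "A = unit_ball_vol DIM('a) * 2^DIM('a) * R powr (DIM('a) - g)"
  have "(2::real) powr (DIM('a) - g) < 2 powr 0"
    using g by (intro powr_less_mono) auto
  hence \<rho>: "0 < \<rho>" "\<rho> < 1" by (simp_all add: \<rho>_def)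
  have "A \<ge> 0" unfolding A_def by simp
  have dyadic_bound: "indicator {x::'a. R \<le> norm x} x * ennreal (norm x powr (-g))
      \<le> (\<Sum>k. ennreal (c k) * indicator (cball 0 (2^Suc k * R)) x)" for x :: 'a
  proof (cases "R \<le> norm x")
    case True
    then obtain k :: nat where k: "2^k * R \<le> norm x" "norm x \<le> 2^Suc k * R"
      using exists_dyadic_shell[OF R] by blast
    have "norm x powr (-g) \<le> (2^k * R) powr (-g)"
      using k(1) R g by (intro powr_mono2') auto
    hence "indicator {x::'a. R \<le> norm x} x * ennreal (norm x powr (-g))
        \<le> ennreal (c k) * indicator (cball 0 (2^Suc k * R)) x"
      using True k(2) by (auto intro!: ennreal_leI simp: c_def)
    also have "\<dots> \<le> (\<Sum>k. ennreal (c k) * indicator (cball 0 (2^Suc k * R)) x)"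
      by (rule ennreal_term_le_suminf)
    finally show ?thesis .
  qed simp
  have "(\<integral>\<^sup>+x. indicator {x::'a. R \<le> norm x} x * ennreal (norm x powr (-g)) \<partial>lborel)
      \<le> (\<integral>\<^sup>+x. (\<Sum>k. ennreal (c k) * indicator (cball (0::'a) (2^Suc k * R)) x) \<partial>lborel)"
    by (rule nn_integral_mono) (rule dyadic_bound)
  also have "\<dots> = (\<Sum>k. ennreal (c k) * emeasure lborel (cball (0::'a) (2^Suc k * R)))"
    by (subst nn_integral_suminf) (measurable, auto simp: nn_integral_cmult_indicator)
  also have "\<dots> = (\<Sum>k. ennreal (A * \<rho>^k))"
    by (simp only: c_def A_def \<rho>_def powr_mult_emeasure_cball_dyadic[OF R])
  also have "\<dots> < \<infinity>"
  proof -
    have "summable (\<lambda>k. A * \<rho>^k)"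
      using \<rho> by (intro summable_mult summable_geometric) auto
    hence "(\<Sum>k. ennreal (A * \<rho>^k)) \<noteq> top"
      using \<open>A \<ge> 0\<close> \<rho> by (intro ennreal_suminf_neq_top) auto
    thus ?thesis by (simp add: top.not_eq_extremum)
  qed
  finally show ?thesis .
qed

lemma in_Lp_of_power_decay:
  fixes f :: "real^'n \<Rightarrow> real" and R C b r :: real
  assumes meas: "f \<in> borel_measurable lebesgue" and nonneg: "\<And>x. f x \<ge> 0"
    and bdd: "bdd_above (range f)"
    and decay: "\<And>x. norm x \<ge> R \<Longrightarrow> f x \<le> C * norm x powr (-b)"
    and r: "r > 0" and br: "b * r > CARD('n)"
  shows "in_Lp r f"
proof -
  define R' where "R' = max R 1"
  define C' where "C' = max C 1"
  obtain B where B: "\<And>x. f x \<le> B" using bdd by (auto simp: bdd_above_def)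
  have R': "R' > 0" "R \<le> R'" and C': "C' > 0" by (auto simp: R'_def C'_def)
  define h where "h x = ennreal (B powr r) * indicator (cball (0::real^'n) R') x
      + ennreal (C' powr r) * (indicator {x. R' \<le> norm x} x * ennreal (norm x powr (-(b*r))))" for x
  have f_le_h: "ennreal (\<bar>f x\<bar> powr r) \<le> h x" for x
  proof (cases "norm x \<le> R'")
    case True
    have "\<bar>f x\<bar> powr r \<le> B powr r"
      using nonneg[of x] B[of x] r by (auto intro!: powr_mono2)
    then show ?thesis
      using True unfolding h_def by (auto intro: ennreal_leI add_increasing2)
  next
    case False
    have "f x \<le> C' * norm x powr (-b)"
      using decay[of x] False R' unfolding C'_def
      by (smt (verit) mult_right_mono powr_ge_zero)
    then have "\<bar>f x\<bar> powr r \<le> (C' * norm x powr (-b)) powr r"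
      using nonneg[of x] r by (auto intro!: powr_mono2)
    also have "\<dots> = C' powr r * norm x powr (-(b*r))"
      using C' by (simp add: powr_mult powr_powr)
    finally show ?thesis
      using False unfolding h_def by (auto simp: ennreal_mult'[symmetric] intro: ennreal_leI add_increasing)
  qed
  have "(\<integral>\<^sup>+ x. ennreal (\<bar>f x\<bar> powr r) \<partial>lebesgue) \<le> (\<integral>\<^sup>+ x. h x \<partial>lebesgue)"
    by (rule nn_integral_mono) (rule f_le_h)
  also have "\<dots> = (\<integral>\<^sup>+ x. h x \<partial>lborel)"
    by (rule nn_integral_completion)
  also have "\<dots> = ennreal (B powr r) * emeasure lborel (cball (0::real^'n) R')
      + ennreal (C' powr r) * (\<integral>\<^sup>+x. indicator {x::real^'n. R' \<le> norm x} x * ennreal (norm x powr (-(b*r))) \<partial>lborel)"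
  proof -
    have ball: "(\<lambda>x. ennreal (B powr r) * indicator (cball (0::real^'n) R') x) \<in> borel_measurable lborel"
      by (intro borel_measurable_times_ennreal borel_measurable_const borel_measurable_indicator)
         (auto intro: borel_closed)
    have tail: "(\<lambda>x. ennreal (C' powr r) * (indicator {x::real^'n. R' \<le> norm x} x
        * ennreal (norm x powr (-(b*r))))) \<in> borel_measurable lborel"
      by measurable
    show ?thesis
      unfolding h_def by (subst nn_integral_add[OF ball tail]) (simp add: nn_integral_cmult_indicator nn_integral_cmult)
  qed
  also have "\<dots> < \<infinity>"
    using nn_integral_norm_powr_outside_ball_finite[where 'a="real^'n" and g="b*r" and R=R']
      emeasure_lborel_cball_finite[of "0::real^'n" R'] br R'
    by (simp add: ennreal_mult_less_top ennreal_add_less_top)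
  finally show ?thesis unfolding in_Lp_def using meas by simp
qed

lemma in_Lp_of_log_power_decay:
  fixes f :: "real^'n \<Rightarrow> real" and R C b r :: real
  assumes meas: "f \<in> borel_measurable lebesgue" and nonneg: "\<And>x. f x \<ge> 0"
    and bdd: "bdd_above (range f)"
    and decay: "\<And>x. norm x \<ge> R \<Longrightarrow> f x \<le> C * (norm x powr (-b) * ln (norm x))"
    and r: "r > 0" and br: "b * r > CARD('n)"
  shows "in_Lp r f"
proof -
  define \<delta> where "\<delta> = (b * r - CARD('n)) / (2 * r)"
  have \<delta>: "\<delta> > 0" "(b - \<delta>) * r > CARD('n)"
    using r br by (auto simp: \<delta>_def field_simps)
  have "f x \<le> (max C 0 / \<delta>) * norm x powr (-(b - \<delta>))" if x: "norm x \<ge> max R 1" for x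
  proof -
    have "f x \<le> max C 0 * (norm x powr (-b) * ln (norm x))"
      using decay[of x] x by (smt (verit) ln_ge_zero mult_nonneg_nonneg mult_right_mono powr_ge_zero)
    also have "\<dots> \<le> max C 0 * (norm x powr (-b) * (norm x powr \<delta> / \<delta>))"
      using x \<delta> by (intro mult_left_mono ln_powr_bound) auto
    also have "\<dots> = (max C 0 / \<delta>) * norm x powr (-(b - \<delta>))"
      using x by (simp add: powr_add[symmetric] algebra_simps)
    finally show ?thesis .
  qed
  then show ?thesis
    using in_Lp_of_power_decay[OF meas nonneg bdd _ r \<delta>(2)] by blast
qed

lemma in_Lp_of_asym_equiv_powr:
  fixes f :: "real^'n \<Rightarrow> real" and b r :: real
  assumes "f \<in> borel_measurable lebesgue" "\<And>x. f x \<ge> 0" "bdd_above (range f)"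
    and "asym_equiv f (\<lambda>x. norm x powr (-b))" and "r > 0" "b * r > CARD('n)"
  shows "in_Lp r f"
  using assms(4) in_Lp_of_power_decay[OF assms(1-3) _ assms(5,6)]
  unfolding asym_equiv_def by blast

lemma in_Lp_of_asym_equiv_log_powr:
  fixes f :: "real^'n \<Rightarrow> real" and b r :: real
  assumes "f \<in> borel_measurable lebesgue" "\<And>x. f x \<ge> 0" "bdd_above (range f)"
    and "asym_equiv f (\<lambda>x. norm x powr (-b) * ln (norm x))" and "r > 0" "b * r > CARD('n)"
  shows "in_Lp r f"
  using assms(4) in_Lp_of_log_power_decay[OF assms(1-3) _ assms(5,6)]
  unfolding asym_equiv_def by blast

lemma hyperbola_condition_imp_bound:
  fixes N \<alpha> p q :: real
  assumes "N > 0" "p > 0" "q > 0" and "1 / (p + 1) + 1 / (q + 1) \<le> (N - \<alpha>) / N"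
  shows "\<alpha> * (p + 1) * (q + 1) \<le> N * (p * q - 1)"
proof -
  have "1 / (p + 1) + 1 / (q + 1) = (p + q + 2) / ((p + 1) * (q + 1))"
    using assms by (simp add: field_simps)
  with assms have "(p + q + 2) / ((p + 1) * (q + 1)) \<le> (N - \<alpha>) / N"
    by simp
  with assms have "(p + q + 2) * N \<le> (N - \<alpha>) * ((p + 1) * (q + 1))"
    by (simp add: divide_simps)
  then show ?thesis by (simp add: algebra_simps)
qed

lemma hyperbola_bound_imp_decay_rates:
  fixes N \<alpha> p q :: real
  assumes "\<alpha> > 0" "p > 0" "q > 0" "p * q > 1"
    and gap: "\<alpha> * (p + 1) * (q + 1) \<le> N * (p * q - 1)"
  shows "(N - \<alpha>) * (p * q - 1) > \<alpha> * (q + 1)"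
    and "(N - \<alpha>) * (p * q - 1) > \<alpha> * (p + 1)"
    and "(N * p - \<alpha> * (p + 1)) * (p * q - 1) > \<alpha> * (p + 1)"
proof -
  have "(N - \<alpha>) * (p * q - 1) \<ge> \<alpha> * (p + q + 2)"
    using gap by (simp add: algebra_simps)
  moreover have "\<alpha> > 0" "\<alpha> * p > 0" "\<alpha> * q > 0"
    using assms by simp_all
  ultimately show "(N - \<alpha>) * (p * q - 1) > \<alpha> * (q + 1)" "(N - \<alpha>) * (p * q - 1) > \<alpha> * (p + 1)"
    by (simp_all add: algebra_simps)
  have "p * (\<alpha> * (p + 1) * (q + 1)) \<le> p * (N * (p * q - 1))"
    using gap assms by (intro mult_left_mono) auto
  moreover have "\<alpha> * (p + 1) * (p + 1) > \<alpha> * (p + 1)"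
    using assms by simp
  ultimately show "(N * p - \<alpha> * (p + 1)) * (p * q - 1) > \<alpha> * (p + 1)"
    by (simp add: algebra_simps)
qed

lemma Lp_exponent_times_decay_gt:
  fixes N b m D :: real
  assumes "b * m > D" "D > 0" "N > 0"
  shows "b * (N * m / D) > N"
proof -
  have "N * D / D < N * (b * m) / D"
    using assms by (intro divide_strict_right_mono mult_strict_left_mono) auto
  then show ?thesis using assms by (simp add: mult.left_commute)
qed

theorem proposition4p6:
  fixes u v :: "real ^ 'n \<Rightarrow> real" and \<alpha> p q :: real
  assumes n3: "CARD('n) \<ge> 3"
    and alpha: "0 < \<alpha>" "\<alpha> < real CARD('n)"
    and pq: "0 < p" "0 < q" "p * q > 1" "p \<le> q"
    and crit: "1 / (p + 1) + 1 / (q + 1) \<le> (real CARD('n) - \<alpha>) / real CARD('n)"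
    and upos: "\<And>x. u x > 0" and vpos: "\<And>x. v x > 0"
    and umeas: "u \<in> borel_measurable lebesgue" and vmeas: "v \<in> borel_measurable lebesgue"
    and ueq: "\<And>x. ennreal (u x) = riesz_pot \<alpha> (\<lambda>y. v y powr q) x"
    and veq: "\<And>x. ennreal (v x) = riesz_pot \<alpha> (\<lambda>y. u y powr p) x"
    and ubdd: "bdd_above (range u)" and vbdd: "bdd_above (range v)"
    and uasym: "asym_equiv u (\<lambda>x. norm x powr (\<alpha> - real CARD('n)))"
    and vasym1: "p * (real CARD('n) - \<alpha>) > real CARD('n) \<Longrightarrow>
        asym_equiv v (\<lambda>x. norm x powr (\<alpha> - real CARD('n)))"
    and vasym2: "p * (real CARD('n) - \<alpha>) = real CARD('n) \<Longrightarrow>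
        asym_equiv v (\<lambda>x. norm x powr (\<alpha> - real CARD('n)) * ln (norm x))"
    and vasym3: "p * (real CARD('n) - \<alpha>) < real CARD('n) \<Longrightarrow>
        asym_equiv v (\<lambda>x. norm x powr ((\<alpha> - real CARD('n)) * (p + 1) + real CARD('n)))"
  shows "in_Lp (real CARD('n) * (p * q - 1) / (\<alpha> * (q + 1))) u \<and>
         in_Lp (real CARD('n) * (p * q - 1) / (\<alpha> * (p + 1))) v"
proof -
  define N where "N = real CARD('n)"
  have "N > 0" by (simp add: N_def)
  have gap: "\<alpha> * (p + 1) * (q + 1) \<le> N * (p * q - 1)"
    using hyperbola_condition_imp_bound[OF \<open>N > 0\<close> pq(1,2)] crit by (simp add: N_def)
  note rates = hyperbola_bound_imp_decay_rates[OF alpha(1) pq(1-3) gap]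
  have "\<alpha> * (q + 1) > 0" "\<alpha> * (p + 1) > 0" "p * q - 1 > 0"
    using alpha pq by simp_all
  note exceeds = Lp_exponent_times_decay_gt[OF _ _ \<open>N > 0\<close>]
  have r0: "N * (p * q - 1) / (\<alpha> * (q + 1)) > 0" and s0: "N * (p * q - 1) / (\<alpha> * (p + 1)) > 0"
    using \<open>N > 0\<close> \<open>\<alpha> * (q + 1) > 0\<close> \<open>\<alpha> * (p + 1) > 0\<close> \<open>p * q - 1 > 0\<close> by simp_all
  have u_nonneg: "\<And>x. u x \<ge> 0" and v_nonneg: "\<And>x. v x \<ge> 0"
    using upos vpos less_imp_le by blast+
  have "in_Lp (N * (p * q - 1) / (\<alpha> * (q + 1))) u"
    using uasym exceeds[OF rates(1) \<open>\<alpha> * (q + 1) > 0\<close>]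
    by (intro in_Lp_of_asym_equiv_powr[OF umeas u_nonneg ubdd _ r0, where b = "N - \<alpha>"])
       (simp_all add: N_def)
  moreover have "in_Lp (N * (p * q - 1) / (\<alpha> * (p + 1))) v"
  proof (cases "p * (N - \<alpha>)" N rule: linorder_cases)
    case less
    then show ?thesis
      using vasym3 exceeds[OF rates(3) \<open>\<alpha> * (p + 1) > 0\<close>]
      by (intro in_Lp_of_asym_equiv_powr[OF vmeas v_nonneg vbdd _ s0, where b = "N * p - \<alpha> * (p + 1)"])
         (simp_all add: N_def algebra_simps)
  next
    case equal
    then show ?thesis
      using vasym2 exceeds[OF rates(2) \<open>\<alpha> * (p + 1) > 0\<close>]
      by (intro in_Lp_of_asym_equiv_log_powr[OF vmeas v_nonneg vbdd _ s0, where b = "N - \<alpha>"])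
         (simp_all add: N_def)
  next
    case greater
    then show ?thesis
      using vasym1 exceeds[OF rates(2) \<open>\<alpha> * (p + 1) > 0\<close>]
      by (intro in_Lp_of_asym_equiv_powr[OF vmeas v_nonneg vbdd _ s0, where b = "N - \<alpha>"])
         (simp_all add: N_def)
  qed
  ultimately show ?thesis by (simp add: N_def)
qed

end
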